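(* Consider Algorithm 1 applied to $\min\varphi(w)$ s.t. $w\in D$, and fix an outer iteration $j$. Then either the inner loop terminates (i.e., some $i$ satisfies the nonmonotone Armijo condition), or $\|\gamma_{j,i}(w^j-w^{j,i})+\nabla\varphi(w^{j,i})-\nabla\varphi(w^j)\|\to0$ as $i\to\infty$. Moreover, if the inner loop does not terminate, then $w^{j,i}\to w^j$ as $i\to\infty$ and $w^j$ is an M-stationary point of this problem, i.e., $0\in\nabla\varphi(w^j)+\mathcal N^{\lim}_D(w^j)$.
   Context: $\mathbb W$ is a Euclidean space, $\varphi\colon\mathbb W\to\mathbb R$ continuously differentiable, $D\subset\mathbb W$ nonempty and closed (neither need be convex). The limiting normal cone at $\bar w\in D$ is $\mathcal N^{\lim}_D(\bar w):=\limsup_{w\to\bar w}\operatorname{cone}(w-\Pi_D(w))$ (outer set limit, $\Pi_D$ the multivalued Euclidean projection onto $D$). Algorithm 1 (general spectral gradient method, without termination test): parameters $\tau>1$, $\sigma\in(0,1)$, $0<\gamma_{\min}\le\gamma_{\max}<\infty$, $m\in\mathbb N$, starting point $w^0\in D$. For $j=0,1,2,\dots$: set $m_j:=\min(j,m)$ and choose $\gamma_j^0\in[\gamma_{\min},\gamma_{\max}]$; for $i=1,2,\dots$ set $\gamma_{j,i}:=\tau^{i-1}\gamma_j^0$ and compute a (global) solution $w^{j,i}$ of $\min_w \varphi(w^j)+\langle\nabla\varphi(w^j),w-w^j\rangle+\frac{\gamma_{j,i}}2\|w-w^j\|^2$ s.t. $w\in D$ (subproblem $Q(j,i)$); the inner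 loop stops at the first $i$ with $\varphi(w^{j,i})\le\max_{r=0,\dots,m_j}\varphi(w^{j-r})+\sigma\langle\nabla\varphi(w^j),w^{j,i}-w^j\rangle$; then set $i_j:=i$, $\gamma_j:=\gamma_{j,i_j}$, $w^{j+1}:=w^{j,i_j}$. *)

theory Defs
  imports "HOL-Analysis.Analysis"
begin

definition proj_set :: "'a::euclidean_space set \<Rightarrow> 'a \<Rightarrow> 'a set" where
  "proj_set D w = {p \<in> D. \<forall>d\<in>D. dist w p \<le> dist w d}"

text \<open>Outer (Painleve-Kuratowski) limit of a set-valued map S as w tends to wbar
  (sequential characterisation, w = wbar allowed).\<close>
definition outer_limsup :: "('a::metric_space \<Rightarrow> 'b::metric_space set) \<Rightarrow> 'a \<Rightarrow> 'b set" where
  "outer_limsup S wbar = {v. \<exists>ws vs. ws \<longlonglongrightarrow> wbar \<and> vs \<longlonglongrightarrow> v \<and> (\<forall>k. vs k \<in> S (ws k))}"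

definition lim_normal_cone :: "'a::euclidean_space set \<Rightarrow> 'a \<Rightarrow> 'a set" where
  "lim_normal_cone D wbar =
     outer_limsup (\<lambda>w. {t *\<^sub>R (w - p) | t p. t \<ge> 0 \<and> p \<in> proj_set D w}) wbar"

definition subproblem_sol ::
  "('a::euclidean_space \<Rightarrow> real) \<Rightarrow> ('a \<Rightarrow> 'a) \<Rightarrow> 'a set \<Rightarrow> 'a \<Rightarrow> real \<Rightarrow> 'a \<Rightarrow> bool" where
  "subproblem_sol \<phi> g D w gam x \<longleftrightarrow> x \<in> D \<and>
     (\<forall>y\<in>D. \<phi> w + g w \<bullet> (x - w) + gam / 2 * (norm (x - w))\<^sup>2
              \<le> \<phi> w + g w \<bullet> (y - w) + gam / 2 * (norm (y - w))\<^sup>2)"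

definition armijo_ok ::
  "('a::euclidean_space \<Rightarrow> real) \<Rightarrow> ('a \<Rightarrow> 'a) \<Rightarrow> real \<Rightarrow> nat \<Rightarrow> (nat \<Rightarrow> 'a) \<Rightarrow> nat \<Rightarrow> 'a \<Rightarrow> bool" where
  "armijo_ok \<phi> g \<sigma> m w j x \<longleftrightarrow>
     \<phi> x \<le> Max {\<phi> (w (j - r)) | r. r \<le> min j m} + \<sigma> * (g (w j) \<bullet> (x - w j))"

end

theory Submission
  imports Defs
begin

text \<open>If the inner loop never stops, the trial points are projections of
  \<open>w\<^sup>j - \<nabla>\<phi>(w\<^sup>j)/\<gamma>\<^sub>j\<^sub>,\<^sub>i\<close> onto \<open>D\<close> with \<open>\<gamma>\<^sub>j\<^sub>,\<^sub>i \<rightarrow> \<infinity>\<close>. Comparing the subproblem value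
  with the feasible point \<open>w\<^sup>j\<close> gives \<open>\<gamma>\<^sub>j\<^sub>,\<^sub>i \<parallel>w\<^sup>j\<^sup>,\<^sup>i - w\<^sup>j\<parallel> \<le> 2\<parallel>\<nabla>\<phi>(w\<^sup>j)\<parallel>\<close>, so the trial
  points converge to \<open>w\<^sup>j\<close>. The failure of the Armijo test together with the first order
  expansion of \<open>\<phi>\<close> at \<open>w\<^sup>j\<close> then improves this to \<open>\<gamma>\<^sub>j\<^sub>,\<^sub>i \<parallel>w\<^sup>j\<^sup>,\<^sup>i - w\<^sup>j\<parallel> \<rightarrow> 0\<close>. Hence the
  proximal normals \<open>\<gamma>\<^sub>j\<^sub>,\<^sub>i(w\<^sup>j - \<nabla>\<phi>(w\<^sup>j)/\<gamma>\<^sub>j\<^sub>,\<^sub>i - w\<^sup>j\<^sup>,\<^sup>i)\<close> converge to \<open>-\<nabla>\<phi>(w\<^sup>j)\<close>, which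
  therefore lies in the limiting normal cone.\<close>

lemma dist_shifted_center_sq:
  fixes G W x :: "'a::real_inner"
  assumes "\<gamma> \<noteq> 0"
  shows "(dist (W - (1/\<gamma>) *\<^sub>R G) x)\<^sup>2
         = (2/\<gamma>) * (G \<bullet> (x - W) + \<gamma>/2 * (norm (x - W))\<^sup>2) + (norm G / \<gamma>)\<^sup>2"
proof -
  have "(dist (W - (1/\<gamma>) *\<^sub>R G) x)\<^sup>2 = (norm ((x - W) + (1/\<gamma>) *\<^sub>R G))\<^sup>2"
    by (simp add: dist_norm norm_minus_commute algebra_simps)
  also have "\<dots> = (norm (x - W))\<^sup>2 + 2 * (1/\<gamma>) * (G \<bullet> (x - W)) + (1/\<gamma>)\<^sup>2 * (norm G)\<^sup>2"
    unfolding power2_norm_eq_inner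
    by (simp add: inner_add_left inner_add_right inner_commute algebra_simps power2_eq_square)
  finally show ?thesis
    using assms by (simp add: field_simps power2_eq_square)
qed

lemma subproblem_sol_in_proj_set:
  assumes "\<gamma> > 0" and "subproblem_sol \<phi> g D w \<gamma> x"
  shows "x \<in> proj_set D (w - (1/\<gamma>) *\<^sub>R g w)"
proof -
  have "dist (w - (1/\<gamma>) *\<^sub>R g w) x \<le> dist (w - (1/\<gamma>) *\<^sub>R g w) y" if "y \<in> D" for y
  proof (rule power2_le_imp_le)
    have "g w \<bullet> (x - w) + \<gamma>/2 * (norm (x - w))\<^sup>2 \<le> g w \<bullet> (y - w) + \<gamma>/2 * (norm (y - w))\<^sup>2"
      using assms(2) that unfolding subproblem_sol_def by auto
    then have "(2/\<gamma>) * (g w \<bullet> (x - w) + \<gamma>/2 * (norm (x - w))\<^sup>2)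
        \<le> (2/\<gamma>) * (g w \<bullet> (y - w) + \<gamma>/2 * (norm (y - w))\<^sup>2)"
      using assms(1) by (intro mult_left_mono) auto
    then show "(dist (w - (1/\<gamma>) *\<^sub>R g w) x)\<^sup>2 \<le> (dist (w - (1/\<gamma>) *\<^sub>R g w) y)\<^sup>2"
      using assms(1) by (simp only: dist_shifted_center_sq)
  qed simp
  then show ?thesis
    using assms(2) unfolding proj_set_def subproblem_sol_def by blast
qed

lemma subproblem_sol_model_decrease:
  assumes "w \<in> D" and "subproblem_sol \<phi> g D w \<gamma> x"
  shows "g w \<bullet> (x - w) + \<gamma>/2 * (norm (x - w))\<^sup>2 \<le> 0"
  using assms unfolding subproblem_sol_def by fastforce

lemma model_decrease_scaled_step_bound:
  fixes G d :: "'a::real_inner"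
  assumes "G \<bullet> d + \<gamma>/2 * (norm d)\<^sup>2 \<le> 0"
  shows "\<gamma> * norm d \<le> 2 * norm G"
proof (cases "d = 0")
  case False
  have "(\<gamma> * norm d) * norm d \<le> - 2 * (G \<bullet> d)"
    using assms by (simp add: power2_eq_square algebra_simps)
  also have "\<dots> \<le> (2 * norm G) * norm d"
    using norm_cauchy_schwarz[of "-G" d] by simp
  finally show ?thesis
    using False by (simp add: mult_le_cancel_right)
qed simp

text \<open>When the test fails, the actual change of \<open>\<phi>\<close> exceeds a \<open>\<sigma>\<close>-fraction of the linear
  prediction, so the Taylor remainder must absorb a \<open>(1 - \<sigma>)\<close>-fraction of the model decrease.\<close>

lemma armijo_failure_scaled_step_bound:
  fixes G x W :: "'a::real_inner"
  assumes taylor: "\<bar>\<phi> x - \<phi> W - G \<bullet> (x - W)\<bar> \<le> e * norm (x - W)"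
    and fail: "\<phi> W + \<sigma> * (G \<bullet> (x - W)) < \<phi> x"
    and decrease: "G \<bullet> (x - W) + \<gamma>/2 * (norm (x - W))\<^sup>2 \<le> 0"
    and "\<sigma> < 1" and "0 \<le> e"
  shows "(1 - \<sigma>) * \<gamma> * norm (x - W) \<le> 2 * e"
proof (cases "x = W")
  case False
  have "(1 - \<sigma>) * (\<gamma>/2 * (norm (x - W))\<^sup>2) \<le> (1 - \<sigma>) * - (G \<bullet> (x - W))"
    using decrease \<open>\<sigma> < 1\<close> by (intro mult_left_mono) auto
  also have "\<dots> \<le> e * norm (x - W)"
    using taylor fail by (simp add: algebra_simps)
  finally have "((1 - \<sigma>) * \<gamma> * norm (x - W)) * norm (x - W) \<le> (2 * e) * norm (x - W)"
    by (simp add: power2_eq_square algebra_simps)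
  then show ?thesis
    using False by (simp add: mult_le_cancel_right)
qed (simp add: \<open>0 \<le> e\<close>)

lemma scaled_step_tendsto_zero_of_armijo_failure:
  fixes \<phi> :: "'a::real_inner \<Rightarrow> real"
  assumes deriv: "(\<phi> has_derivative (\<lambda>h. G \<bullet> h)) (at W)"
    and conv: "x \<longlonglongrightarrow> W" and "\<sigma> < 1"
    and ev: "\<forall>\<^sub>F i in sequentially. 0 \<le> \<gamma> i
               \<and> G \<bullet> (x i - W) + \<gamma> i/2 * (norm (x i - W))\<^sup>2 \<le> 0
               \<and> \<phi> W + \<sigma> * (G \<bullet> (x i - W)) < \<phi> (x i)"
  shows "(\<lambda>i. \<gamma> i * norm (x i - W)) \<longlonglongrightarrow> 0"
  unfolding tendsto_iff
proof (intro allI impI)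
  fix r :: real
  assume "r > 0"
  define e where "e = r * (1 - \<sigma>) / 4"
  have "e > 0"
    using \<open>r > 0\<close> \<open>\<sigma> < 1\<close> by (simp add: e_def)
  then obtain d where "d > 0" and taylor: "\<And>y. norm (y - W) < d \<Longrightarrow>
      norm (\<phi> y - \<phi> W - G \<bullet> (y - W)) \<le> e * norm (y - W)"
    using deriv unfolding has_derivative_at_alt by blast
  have "\<forall>\<^sub>F i in sequentially. norm (x i - W) < d"
    using conv \<open>d > 0\<close> unfolding tendsto_iff by (simp add: dist_norm)
  with ev show "\<forall>\<^sub>F i in sequentially. dist (\<gamma> i * norm (x i - W)) 0 < r"
  proof eventually_elim
    case (elim i)
    then have "(1 - \<sigma>) * \<gamma> i * norm (x i - W) \<le> (1 - \<sigma>) * (r / 2)"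
      using armijo_failure_scaled_step_bound[of \<phi> "x i" W G e \<sigma> "\<gamma> i"] taylor \<open>\<sigma> < 1\<close> \<open>e > 0\<close>
      by (simp add: e_def)
    then have "\<gamma> i * norm (x i - W) \<le> r / 2"
      using \<open>\<sigma> < 1\<close> by (simp add: mult.assoc)
    then show ?case
      using elim \<open>r > 0\<close> by simp
  qed
qed

lemma tendsto_of_scaled_step_bounded:
  fixes x :: "nat \<Rightarrow> 'a::real_normed_vector"
  assumes "(\<lambda>i. 1 / \<gamma> i) \<longlonglongrightarrow> 0"
    and "\<forall>\<^sub>F i in sequentially. 0 < \<gamma> i \<and> \<gamma> i * norm (x i - W) \<le> C"
  shows "x \<longlonglongrightarrow> W"
proof -
  have "(\<lambda>i. x i - W) \<longlonglongrightarrow> 0"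
  proof (rule Lim_null_comparison)
    show "\<forall>\<^sub>F i in sequentially. norm (x i - W) \<le> C * (1 / \<gamma> i)"
      using assms(2) by eventually_elim (simp add: field_simps)
    show "(\<lambda>i. C * (1 / \<gamma> i)) \<longlonglongrightarrow> 0"
      using tendsto_mult_right_zero[OF assms(1)] .
  qed
  then show ?thesis
    by (simp add: Lim_null[symmetric])
qed

lemma inverse_geometric_tendsto_zero:
  fixes \<tau> c :: real
  assumes "\<tau> > 1" and "c > 0"
  shows "(\<lambda>i. 1 / (\<tau> ^ (i - 1) * c)) \<longlonglongrightarrow> 0"
proof -
  have "(\<lambda>n. inverse (\<tau> ^ n) / c) \<longlonglongrightarrow> 0 / c"
    by (intro tendsto_divide LIMSEQ_inverse_realpow_zero tendsto_const) (use assms in auto)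
  then have "(\<lambda>n. 1 / (\<tau> ^ (n + 1 - 1) * c)) \<longlonglongrightarrow> 0"
    by (simp add: divide_inverse mult.commute)
  then show ?thesis
    by (rule LIMSEQ_offset)
qed

lemma lim_normal_cone_of_proximal_normals:
  assumes "z \<longlonglongrightarrow> W" and "(\<lambda>k. t k *\<^sub>R (z k - p k)) \<longlonglongrightarrow> v"
    and "\<forall>\<^sub>F k in sequentially. 0 \<le> t k \<and> p k \<in> proj_set D (z k)"
  shows "v \<in> lim_normal_cone D W"
proof -
  obtain N where N: "\<And>k. k \<ge> N \<Longrightarrow> 0 \<le> t k \<and> p k \<in> proj_set D (z k)"
    using assms(3) unfolding eventually_sequentially by blast
  have "(\<lambda>k. z (k + N)) \<longlonglongrightarrow> W" and "(\<lambda>k. t (k + N) *\<^sub>R (z (k + N) - p (k + N))) \<longlonglongrightarrow> v"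
    using assms(1,2) by (auto intro: LIMSEQ_ignore_initial_segment)
  moreover have "t (k + N) *\<^sub>R (z (k + N) - p (k + N))
      \<in> {s *\<^sub>R (z (k + N) - q) |s q. 0 \<le> s \<and> q \<in> proj_set D (z (k + N))}" for k
    using N[of "k + N"] by auto
  ultimately show ?thesis
    unfolding lim_normal_cone_def outer_limsup_def by blast
qed

lemma trial_points_tendsto_of_armijo_failure:
  fixes \<phi> :: "'a::euclidean_space \<Rightarrow> real"
  assumes deriv: "(\<phi> has_derivative (\<lambda>h. g W \<bullet> h)) (at W)"
    and inv_\<gamma>: "(\<lambda>i. 1 / \<gamma> i) \<longlonglongrightarrow> 0" and "\<sigma> < 1" and "W \<in> D"
    and trials: "\<forall>\<^sub>F i in sequentially. 0 < \<gamma> i \<and> subproblem_sol \<phi> g D W (\<gamma> i) (x i)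
                   \<and> \<phi> W + \<sigma> * (g W \<bullet> (x i - W)) < \<phi> (x i)"
  shows "x \<longlonglongrightarrow> W" and "(\<lambda>i. \<gamma> i *\<^sub>R (W - x i)) \<longlonglongrightarrow> 0"
proof -
  have decrease: "\<forall>\<^sub>F i in sequentially. 0 < \<gamma> i
      \<and> g W \<bullet> (x i - W) + \<gamma> i/2 * (norm (x i - W))\<^sup>2 \<le> 0
      \<and> \<phi> W + \<sigma> * (g W \<bullet> (x i - W)) < \<phi> (x i)"
    using trials by eventually_elim (use \<open>W \<in> D\<close> subproblem_sol_model_decrease in blast)
  then have "\<forall>\<^sub>F i in sequentially. 0 < \<gamma> i \<and> \<gamma> i * norm (x i - W) \<le> 2 * norm (g W)"
    by eventually_elim (simp add: model_decrease_scaled_step_bound)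
  with inv_\<gamma> show x_conv: "x \<longlonglongrightarrow> W"
    by (rule tendsto_of_scaled_step_bounded)
  from decrease have "\<forall>\<^sub>F i in sequentially. 0 \<le> \<gamma> i
      \<and> g W \<bullet> (x i - W) + \<gamma> i/2 * (norm (x i - W))\<^sup>2 \<le> 0
      \<and> \<phi> W + \<sigma> * (g W \<bullet> (x i - W)) < \<phi> (x i)"
    by eventually_elim simp
  with deriv x_conv \<open>\<sigma> < 1\<close> have "(\<lambda>i. \<gamma> i * norm (x i - W)) \<longlonglongrightarrow> 0"
    by (rule scaled_step_tendsto_zero_of_armijo_failure)
  moreover have "\<forall>\<^sub>F i in sequentially. norm (\<gamma> i *\<^sub>R (W - x i)) \<le> \<gamma> i * norm (x i - W)"
    using trials by eventually_elim (simp add: norm_minus_commute)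
  ultimately show "(\<lambda>i. \<gamma> i *\<^sub>R (W - x i)) \<longlonglongrightarrow> 0"
    by (rule Lim_null_comparison[rotated])
qed

lemma neg_grad_in_lim_normal_cone_of_subproblem_sols:
  assumes inv_\<gamma>: "(\<lambda>i. 1 / \<gamma> i) \<longlonglongrightarrow> 0"
    and scaled_step: "(\<lambda>i. \<gamma> i *\<^sub>R (W - x i)) \<longlonglongrightarrow> 0"
    and trials: "\<forall>\<^sub>F i in sequentially. 0 < \<gamma> i \<and> subproblem_sol \<phi> g D W (\<gamma> i) (x i)"
  shows "- g W \<in> lim_normal_cone D W"
proof (rule lim_normal_cone_of_proximal_normals)
  show "(\<lambda>i. W - (1 / \<gamma> i) *\<^sub>R g W) \<longlonglongrightarrow> W"
    using tendsto_diff[OF tendsto_const tendsto_scaleR[OF inv_\<gamma> tendsto_const]] by simp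
  show "\<forall>\<^sub>F i in sequentially. 0 \<le> \<gamma> i \<and> x i \<in> proj_set D (W - (1 / \<gamma> i) *\<^sub>R g W)"
    using trials by eventually_elim (auto intro: subproblem_sol_in_proj_set)
  have "\<forall>\<^sub>F i in sequentially.
      \<gamma> i *\<^sub>R (W - x i) - g W = \<gamma> i *\<^sub>R ((W - (1 / \<gamma> i) *\<^sub>R g W) - x i)"
    using trials by eventually_elim (simp add: scaleR_diff_right)
  then show "(\<lambda>i. \<gamma> i *\<^sub>R ((W - (1 / \<gamma> i) *\<^sub>R g W) - x i)) \<longlonglongrightarrow> - g W"
    using tendsto_diff[OF scaled_step tendsto_const[of "g W"]] by (simp add: tendsto_cong)
qed

lemma not_armijo_ok_imp_less:
  assumes "\<not> armijo_ok \<phi> g \<sigma> m w j x"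
  shows "\<phi> (w j) + \<sigma> * (g (w j) \<bullet> (x - w j)) < \<phi> x"
proof -
  have "\<phi> (w j) \<le> Max {\<phi> (w (j - r)) | r. r \<le> min j m}"
    by (rule Max_ge) (auto intro!: exI[of _ 0])
  then show ?thesis
    using assms unfolding armijo_ok_def by simp
qed

lemma iterates_in_feasible_set:
  fixes wi :: "nat \<Rightarrow> nat \<Rightarrow> 'a::euclidean_space"
  assumes "w 0 \<in> D" and "k \<le> j"
    and sub: "\<And>k i. k \<le> j \<Longrightarrow> 1 \<le> i \<Longrightarrow> subproblem_sol \<phi> g D (w k) (\<gamma> k i) (wi k i)"
    and prev_term: "\<And>k. k < j \<Longrightarrow> \<exists>i\<ge>1. armijo_ok \<phi> g \<sigma> m w k (wi k i)"
    and prev_step: "\<And>k. k < j \<Longrightarrow>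
                w (Suc k) = wi k (LEAST i. 1 \<le> i \<and> armijo_ok \<phi> g \<sigma> m w k (wi k i))"
  shows "w k \<in> D"
  using \<open>k \<le> j\<close>
proof (induction k)
  case (Suc k)
  let ?P = "\<lambda>i. 1 \<le> i \<and> armijo_ok \<phi> g \<sigma> m w k (wi k i)"
  have "\<exists>i. ?P i"
    using prev_term Suc.prems by auto
  then have "?P (Least ?P)"
    by (rule LeastI_ex)
  then have "wi k (Least ?P) \<in> D"
    using sub[of k "Least ?P"] Suc.prems unfolding subproblem_sol_def by simp
  with Suc.prems prev_step show ?case
    by simp
qed (use \<open>w 0 \<in> D\<close> in simp)

theorem mainTheorem3:
  fixes \<phi> :: "'a::euclidean_space \<Rightarrow> real" and g :: "'a \<Rightarrow> 'a" and D :: "'a set"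
    and \<tau> \<sigma> \<gamma>min \<gamma>max :: real and m j :: nat
    and w :: "nat \<Rightarrow> 'a" and wi :: "nat \<Rightarrow> nat \<Rightarrow> 'a" and \<gamma>0 :: "nat \<Rightarrow> real"
  assumes grad: "\<And>x. (\<phi> has_derivative (\<lambda>h. g x \<bullet> h)) (at x)"
    and grad_cont: "continuous_on UNIV g"
    and D_ne: "D \<noteq> {}" and D_closed: "closed D"
    and tau: "\<tau> > 1" and sigma: "0 < \<sigma>" "\<sigma> < 1"
    and gam: "0 < \<gamma>min" "\<gamma>min \<le> \<gamma>max"
    and gam0: "\<And>k. k \<le> j \<Longrightarrow> \<gamma>min \<le> \<gamma>0 k \<and> \<gamma>0 k \<le> \<gamma>max"
    and start: "w 0 \<in> D"
    and sub: "\<And>k i. k \<le> j \<Longrightarrow> 1 \<le> i \<Longrightarrow>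
                subproblem_sol \<phi> g D (w k) (\<tau> ^ (i - 1) * \<gamma>0 k) (wi k i)"
    and prev_term: "\<And>k. k < j \<Longrightarrow> \<exists>i\<ge>1. armijo_ok \<phi> g \<sigma> m w k (wi k i)"
    and prev_step: "\<And>k. k < j \<Longrightarrow>
                w (Suc k) = wi k (LEAST i. 1 \<le> i \<and> armijo_ok \<phi> g \<sigma> m w k (wi k i))"
  shows "((\<exists>i\<ge>1. armijo_ok \<phi> g \<sigma> m w j (wi j i)) \<or>
         ((\<lambda>i. norm ((\<tau> ^ (i - 1) * \<gamma>0 j) *\<^sub>R (w j - wi j i) + g (wi j i) - g (w j)))
            \<longlonglongrightarrow> 0)) \<and>
         (\<not> (\<exists>i\<ge>1. armijo_ok \<phi> g \<sigma> m w j (wi j i)) \<longrightarrow>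
         (wi j \<longlonglongrightarrow> w j) \<and> 0 \<in> (\<lambda>v. g (w j) + v) ` lim_normal_cone D (w j))"
proof (cases "\<exists>i\<ge>1. armijo_ok \<phi> g \<sigma> m w j (wi j i)")
  case False
  define \<gamma> where "\<gamma> i = \<tau> ^ (i - 1) * \<gamma>0 j" for i
  let ?W = "w j" and ?x = "wi j"
  have W_in_D: "?W \<in> D"
    using iterates_in_feasible_set[OF start order.refl sub prev_term prev_step] .
  have inv_\<gamma>: "(\<lambda>i. 1 / \<gamma> i) \<longlonglongrightarrow> 0"
    unfolding \<gamma>_def using inverse_geometric_tendsto_zero tau gam gam0[of j] by simp
  have trials: "\<forall>\<^sub>F i in sequentially. 0 < \<gamma> i \<and> subproblem_sol \<phi> g D ?W (\<gamma> i) (?x i)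
      \<and> \<phi> ?W + \<sigma> * (g ?W \<bullet> (?x i - ?W)) < \<phi> (?x i)"
    using False sub[of j] tau gam gam0[of j]
    by (intro eventually_sequentiallyI[of 1]) (auto simp: \<gamma>_def not_armijo_ok_imp_less)
  have x_conv: "?x \<longlonglongrightarrow> ?W" and scaled_step: "(\<lambda>i. \<gamma> i *\<^sub>R (?W - ?x i)) \<longlonglongrightarrow> 0"
    using trial_points_tendsto_of_armijo_failure[OF grad inv_\<gamma> sigma(2) W_in_D trials] by blast+
  have "(\<lambda>i. g (?x i) - g ?W) \<longlonglongrightarrow> 0"
    using continuous_on_tendsto_compose[OF grad_cont x_conv] by (simp add: Lim_null[symmetric])
  from tendsto_add[OF scaled_step this]
  have "(\<lambda>i. \<gamma> i *\<^sub>R (?W - ?x i) + (g (?x i) - g ?W)) \<longlonglongrightarrow> 0"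
    by simp
  from tendsto_norm_zero[OF this]
  have residual: "(\<lambda>i. norm (\<gamma> i *\<^sub>R (?W - ?x i) + g (?x i) - g ?W)) \<longlonglongrightarrow> 0"
    by (simp add: add_diff_eq)
  have "- g ?W \<in> lim_normal_cone D ?W"
    using trials
    by (intro neg_grad_in_lim_normal_cone_of_subproblem_sols[OF inv_\<gamma> scaled_step]) (auto elim: eventually_mono)
  then have "0 \<in> (\<lambda>v. g ?W + v) ` lim_normal_cone D ?W"
    by (rule rev_image_eqI) simp
  with False residual x_conv show ?thesis
    unfolding \<gamma>_def by simp
qed simp

end
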